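(* Assume $2\le|\mathcal U_{\mathcal E}|\le T$ and $T_1\ge|\mathcal U_{\mathcal E}|$. Then for any $S_i\neq S_j\in\mathcal U_{\mathcal E}$, the ATE estimate produced by UCB-TSN satisfies $$\mathbb E\big[|\hat\Delta^{(i,j)}_T-\Delta^{(i,j)}|\big]=\tilde O\Big(\sqrt{|\mathcal U_{\mathcal E}|/T_1}\Big).$$
   Context: Bandit with network interference: arm set $\mathcal K=[K]$, units $\mathcal U=[N]$, horizon $T$, fixed adjacency matrix $\mathbb H$. Choosing a super arm $A\in\mathcal K^{\mathcal U}$ in round $t$ yields for each unit $i$ the reward $r_{i,t}(A)=Y_i(A)+\eta_{i,t}$ with unknown $Y_i(A)\in[0,1]$ and i.i.d. zero-mean 1-sub-Gaussian noise $\eta_{i,t}$. A fixed exposure mapping $\mathbf S:\mathcal U\times\mathcal K^{\mathcal U}\times\{\mathbb H\}\to\mathcal U_s$ ($|\mathcal U_s|=d_s$) assigns to $A$ the exposure super arm $(\mathbf S(i,A,\mathbb H))_{i\in\mathcal U}$. With a fixed partition $\mathcal C$ of $[N]$ into clusters, $\mathcal U_{\mathcal C}$ = exposure vectors constant on each cluster, $\mathcal U_{\mathcal O}$ = exposure vectors realized by some $A$, $\mathcal U_{\mathcal E}=\mathcal U_{\mathcal C}\cap\mathcal U_{\mathcal O}$. For $S\in\mathcal U_{\mathcal E}$, $\tilde Y_i(S)=\sum_AY_i(A)\mathbb P(A\mid S)$ where $\mathbb P(\cdot\mid S)$ is uniform over the super arms $A$ whose exposure super arm equals $S$. ATE: $\Delta^{(i,j)}=\frac1N\sum_{i'\in\mathcal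 U}(\tilde Y_{i'}(S_i)-\tilde Y_{i'}(S_j))$. Sampling$(S)$: draw $A$ uniformly among super arms with exposure super arm $S$, pull it, and record $\tilde r_{i,t}(S):=r_{i,t}(A)$ for all $i$. Algorithm UCB-TSN (parameters $T_1\le T$, $\delta$): Let $\mathcal N^t_S$ be the number of rounds $t'\le t$ with $S_{t'}=S$ and $\hat R_t(S)$ the average of $\frac1N\sum_{i}\tilde r_{i,t'}(S_{t'})$ over those rounds ($0$ if none). Phase 1: for $t=1,\dots,T_1$, play the exposure super arms of $\mathcal U_{\mathcal E}$ in round-robin order, using Sampling; then output $\hat\Delta^{(i,j)}_T=\hat R_{T_1}(S_i)-\hat R_{T_1}(S_j)$ for all $S_i\neq S_j$. Phase 2: for $t=T_1+1,\dots,T$, play $S_t=\arg\max_{S\in\mathcal U_{\mathcal E}}\mathrm{UCB}_{t-1,S}$ via Sampling, where $\mathrm{UCB}_{t,S}=\hat R_t(S)+\sqrt{9\log(1/\delta)/\mathcal N^t_S}$. $\tilde O$ hides polylogarithmic factors and the order is with respect to $K,T$ (and $T_1$). *)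

theory Defs
  imports "HOL-Probability.Probability"
begin

text \<open>Units are {..<N}, arms are {..<K}. A super arm is an extensional function
  in PiE {..<N} (\<lambda>_. {..<K}). The exposure mapping S takes a unit, a super arm
  and the (fixed) adjacency matrix H.\<close>

definition superarms :: "nat \<Rightarrow> nat \<Rightarrow> (nat \<Rightarrow> nat) set" where
  "superarms N K = PiE {..<N} (\<lambda>_. {..<K})"

definition expo_vec ::
  "nat \<Rightarrow> (nat \<Rightarrow> (nat \<Rightarrow> nat) \<Rightarrow> (nat \<Rightarrow> nat \<Rightarrow> real) \<Rightarrow> 'e)
   \<Rightarrow> (nat \<Rightarrow> nat \<Rightarrow> real) \<Rightarrow> (nat \<Rightarrow> nat) \<Rightarrow> (nat \<Rightarrow> 'e)" where
  "expo_vec N S H A = (\<lambda>i\<in>{..<N}. S i A H)"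

definition U_C :: "nat \<Rightarrow> 'e set \<Rightarrow> nat set set \<Rightarrow> (nat \<Rightarrow> 'e) set" where
  "U_C N Us Cl = {v \<in> PiE {..<N} (\<lambda>_. Us). \<forall>c\<in>Cl. \<forall>i\<in>c. \<forall>j\<in>c. v i = v j}"

definition U_O where
  "U_O N K S H = expo_vec N S H ` superarms N K"

definition U_E where
  "U_E N K S H Us Cl = U_C N Us Cl \<inter> U_O N K S H"

definition preimg where
  "preimg N K S H v = {A \<in> superarms N K. expo_vec N S H A = v}"

definition Ytil :: "nat \<Rightarrow> nat \<Rightarrow> _ \<Rightarrow> _ \<Rightarrow> (nat \<Rightarrow> (nat \<Rightarrow> nat) \<Rightarrow> real)
    \<Rightarrow> nat \<Rightarrow> (nat \<Rightarrow> 'e) \<Rightarrow> real" where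
  "Ytil N K S H Y i v = (\<Sum>A\<in>preimg N K S H v. Y i A) / real (card (preimg N K S H v))"

definition ATE where
  "ATE N K S H Y v w = (1 / real N) * (\<Sum>i<N. Ytil N K S H Y i v - Ytil N K S H Y i w)"

definition sub_gaussian1 :: "real measure \<Rightarrow> bool" where
  "sub_gaussian1 D \<longleftrightarrow> prob_space D \<and> sets D = sets borel \<and>
     integrable D (\<lambda>x. x) \<and> (\<integral>x. x \<partial>D) = 0 \<and>
     (\<forall>l::real. integrable D (\<lambda>x. exp (l * x)) \<and>
        (\<integral>x. exp (l * x) \<partial>D) \<le> exp (l\<^sup>2 / 2))"

definition rr_arm :: "'a list \<Rightarrow> nat \<Rightarrow> 'a" where
  "rr_arm es t = es ! ((t - 1) mod length es)"

text \<open>Law of the Phase-1 history: in each round t \<in> {1..T1} an independent super arm drawn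
  uniformly among those with exposure super arm rr_arm es t (Sampling), together with
  i.i.d. noise (eta_{i,t})_{i<N} with law D.\<close>
definition phase1_space ::
  "nat \<Rightarrow> nat \<Rightarrow> _ \<Rightarrow> _ \<Rightarrow> real measure \<Rightarrow> (nat \<Rightarrow> 'e) list \<Rightarrow> nat
    \<Rightarrow> (nat \<Rightarrow> (nat \<Rightarrow> nat) \<times> (nat \<Rightarrow> real)) measure" where
  "phase1_space N K S H D es T1 =
     PiM {1..T1} (\<lambda>t. measure_pmf (pmf_of_set (preimg N K S H (rr_arm es t)))
                        \<Otimes>\<^sub>M PiM {..<N} (\<lambda>_. D))"

text \<open>Empirical mean reward R-hat_{T1}(v) of exposure super arm v after Phase 1;
  omega t = (A_t, eta_t), and the recorded reward of unit i is Y i A_t + eta_t i.\<close>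
definition Rhat where
  "Rhat N Y es T1 \<omega> v =
     (let R = {t \<in> {1..T1}. rr_arm es t = v} in
      if R = {} then 0
      else (\<Sum>t\<in>R. (1 / real N) * (\<Sum>i<N. Y i (fst (\<omega> t)) + snd (\<omega> t) i)) / real (card R))"

definition ATE_hat where
  "ATE_hat N Y es T1 \<omega> v w = Rhat N Y es T1 \<omega> v - Rhat N Y es T1 \<omega> w"

end

theory Submission
  imports Defs
begin

text \<open>
  Phase 1 plays every exposure super arm of the round-robin list \<open>es\<close> (of length
  \<open>m = |U_E|\<close>) in at least \<open>\<lfloor>T1/m\<rfloor> \<ge> T1/(2m)\<close> rounds. In a round playing \<open>v\<close>, the
  unit-averaged reward is the average of \<open>Y\<close> at a uniformly drawn preimage of \<open>v\<close> plus the
  unit average of the noise; it is centred at \<open>R(v) = (1/N) \<Sum>\<^sub>i Ytil i v\<close> and its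
  second moment about \<open>R(v)\<close> is bounded by an absolute constant, because rewards lie in
  \<open>[0,1]\<close> and a 1-sub-Gaussian variable has second moment at most \<open>4 \<surd>e\<close>. The error of the
  ATE estimate is a weighted sum of these centred rewards over independent rounds, with
  weights \<open>1/n\<^sub>v\<close> and \<open>-1/n\<^sub>w\<close>, so its second moment is \<open>O(1/n\<^sub>v + 1/n\<^sub>w) = O(m/T1)\<close>;
  Cauchy-Schwarz (in AM-GM form) turns this into the \<open>L\<^sup>1\<close> bound \<open>O(\<surd>(m/T1))\<close>, without
  logarithmic factors.
\<close>

lemma
  assumes g: "g \<in> measurable M N" and distr: "distr M N g = N"
    and f: "f \<in> borel_measurable N" "integrable N f"
  shows integrable_comp_measure_preserving: "integrable M (\<lambda>x. f (g x))"
    and integral_comp_measure_preserving: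
      "integral\<^sup>L M (\<lambda>x. f (g x)) = (integral\<^sup>L N f :: real)"
  using integrable_distr_eq[OF g f(1)] integral_distr[OF g f(1)] distr f(2) by simp_all

lemma distr_pair_snd:
  assumes "prob_space M1" "prob_space M2"
  shows "distr (M1 \<Otimes>\<^sub>M M2) M2 snd = M2"
proof (intro measure_eqI)
  interpret M1: prob_space M1 by fact
  interpret M2: prob_space M2 by fact
  fix A assume A: "A \<in> sets (distr (M1 \<Otimes>\<^sub>M M2) M2 snd)"
  then have "emeasure (distr (M1 \<Otimes>\<^sub>M M2) M2 snd) A = emeasure (M1 \<Otimes>\<^sub>M M2) (space M1 \<times> A)"
    by (auto simp: emeasure_distr space_pair_measure dest: sets.sets_into_space
        intro!: arg_cong2[where f=emeasure])
  with A show "emeasure (distr (M1 \<Otimes>\<^sub>M M2) M2 snd) A = emeasure M2 A"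
    by (simp add: M2.emeasure_pair_measure_Times M1.emeasure_space_1)
qed simp

context product_prob_space
begin

lemma
  assumes "t \<in> I" "f \<in> borel_measurable (M t)" "integrable (M t) f"
  shows integrable_PiM_component: "integrable (PiM I M) (\<lambda>\<omega>. f (\<omega> t))"
    and integral_PiM_component: "integral\<^sup>L (PiM I M) (\<lambda>\<omega>. f (\<omega> t)) = (integral\<^sup>L (M t) f :: real)"
  using measurable_component_singleton[OF assms(1)] PiM_component[OF assms(1)] assms(2,3)
  by (rule integrable_comp_measure_preserving integral_comp_measure_preserving)+

lemma
  fixes f g :: "'a \<Rightarrow> real"
  assumes "finite I" "s \<in> I" "t \<in> I" "s \<noteq> t" "integrable (M s) f" "integrable (M t) g"
  shows integrable_PiM_two_components: "integrable (PiM I M) (\<lambda>\<omega>. f (\<omega> s) * g (\<omega> t))"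
    and integral_PiM_two_components:
      "integral\<^sup>L (PiM I M) (\<lambda>\<omega>. f (\<omega> s) * g (\<omega> t)) = integral\<^sup>L (M s) f * integral\<^sup>L (M t) g"
proof -
  define F where "F u = (if u = s then f else if u = t then g else (\<lambda>_. 1))" for u
  have F_int: "integrable (M u) (F u)" if "u \<in> I" for u
    using assms by (auto simp: F_def)
  have "(\<Prod>u\<in>I. F u (\<omega> u)) = (\<Prod>u\<in>{s, t}. F u (\<omega> u))" for \<omega>
    using assms by (intro prod.mono_neutral_right) (auto simp: F_def)
  then have prod_eq: "(\<Prod>u\<in>I. F u (\<omega> u)) = f (\<omega> s) * g (\<omega> t)" for \<omega>
    using assms(4) by (simp add: F_def)
  show "integrable (PiM I M) (\<lambda>\<omega>. f (\<omega> s) * g (\<omega> t))"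
    using product_integrable_prod[OF assms(1) F_int] by (simp add: prod_eq)
  have "integral\<^sup>L (PiM I M) (\<lambda>\<omega>. f (\<omega> s) * g (\<omega> t))
      = integral\<^sup>L (PiM I M) (\<lambda>\<omega>. \<Prod>u\<in>I. F u (\<omega> u))"
    by (simp only: prod_eq)
  also have "\<dots> = (\<Prod>u\<in>I. integral\<^sup>L (M u) (F u))"
    by (rule product_integral_prod[OF assms(1) F_int])
  also have "\<dots> = (\<Prod>u\<in>{s, t}. integral\<^sup>L (M u) (F u))"
    using assms by (intro prod.mono_neutral_right) (auto simp: F_def M.prob_space)
  finally show "integral\<^sup>L (PiM I M) (\<lambda>\<omega>. f (\<omega> s) * g (\<omega> t))
      = integral\<^sup>L (M s) f * integral\<^sup>L (M t) g"
    using assms(4) by (simp add: F_def)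
qed

lemma
  fixes h :: "'i \<Rightarrow> 'a \<Rightarrow> real"
  assumes fin: "finite I" and ts: "t \<in> I" "s \<in> I"
    and h_meas: "\<And>u. u \<in> I \<Longrightarrow> h u \<in> borel_measurable (M u)"
    and h_sq_int: "\<And>u. u \<in> I \<Longrightarrow> integrable (M u) (\<lambda>x. (h u x)\<^sup>2)"
    and h_centred: "\<And>u. u \<in> I \<Longrightarrow> integral\<^sup>L (M u) (h u) = 0"
  shows integrable_PiM_centred_product: "integrable (PiM I M) (\<lambda>\<omega>. h t (\<omega> t) * h s (\<omega> s))"
    and integral_PiM_centred_product:
      "integral\<^sup>L (PiM I M) (\<lambda>\<omega>. h t (\<omega> t) * h s (\<omega> s))
        = (if t = s then integral\<^sup>L (M t) (\<lambda>x. (h t x)\<^sup>2) else 0)"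
proof -
  have "integrable (PiM I M) (\<lambda>\<omega>. h t (\<omega> t) * h s (\<omega> s))
      \<and> integral\<^sup>L (PiM I M) (\<lambda>\<omega>. h t (\<omega> t) * h s (\<omega> s))
        = (if t = s then integral\<^sup>L (M t) (\<lambda>x. (h t x)\<^sup>2) else 0)" (is "?int \<and> ?eq")
  proof (cases "t = s")
    case True
    have sq_meas: "(\<lambda>x. (h t x)\<^sup>2) \<in> borel_measurable (M t)"
      using h_meas[OF ts(1)] by measurable
    show ?thesis
      using True integrable_PiM_component[OF ts(1) sq_meas h_sq_int[OF ts(1)]]
        integral_PiM_component[OF ts(1) sq_meas h_sq_int[OF ts(1)]]
      by (simp add: power2_eq_square)
  next
    case False
    have h_int: "integrable (M u) (h u)" if "u \<in> I" for u
      by (rule M.square_integrable_imp_integrable[OF h_meas[OF that] h_sq_int[OF that]])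
    show ?thesis
      using False integrable_PiM_two_components[OF fin ts False h_int[OF ts(1)] h_int[OF ts(2)]]
        integral_PiM_two_components[OF fin ts False h_int[OF ts(1)] h_int[OF ts(2)]]
        h_centred[OF ts(1)] by simp
  qed
  then show ?int ?eq by simp_all
qed

lemma
  fixes h :: "'i \<Rightarrow> 'a \<Rightarrow> real"
  assumes fin: "finite I"
    and h_meas: "\<And>t. t \<in> I \<Longrightarrow> h t \<in> borel_measurable (M t)"
    and h_sq_int: "\<And>t. t \<in> I \<Longrightarrow> integrable (M t) (\<lambda>x. (h t x)\<^sup>2)"
    and h_centred: "\<And>t. t \<in> I \<Longrightarrow> integral\<^sup>L (M t) (h t) = 0"
    and h_sq_le: "\<And>t. t \<in> I \<Longrightarrow> integral\<^sup>L (M t) (\<lambda>x. (h t x)\<^sup>2) \<le> V"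
  shows integrable_PiM_weighted_sum_square:
      "integrable (PiM I M) (\<lambda>\<omega>. (\<Sum>t\<in>I. c t * h t (\<omega> t))\<^sup>2)"
    and integral_PiM_weighted_sum_square_le:
      "integral\<^sup>L (PiM I M) (\<lambda>\<omega>. (\<Sum>t\<in>I. c t * h t (\<omega> t))\<^sup>2) \<le> V * (\<Sum>t\<in>I. (c t)\<^sup>2)"
proof -
  note product_int = integrable_PiM_centred_product[OF fin _ _ h_meas h_sq_int h_centred]
  note product_integral = integral_PiM_centred_product[OF fin _ _ h_meas h_sq_int h_centred]
  define F where "F t s \<omega> = c t * c s * (h t (\<omega> t) * h s (\<omega> s))" for t s \<omega>
  have square_eq: "(\<Sum>t\<in>I. c t * h t (\<omega> t))\<^sup>2 = (\<Sum>t\<in>I. \<Sum>s\<in>I. F t s \<omega>)" for \<omega>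
    unfolding power2_eq_square sum_product F_def by (intro sum.cong refl) (simp add: algebra_simps)
  have F_int: "integrable (PiM I M) (F t s)" if "t \<in> I" "s \<in> I" for t s
    unfolding F_def using product_int[OF that] by simp
  show "integrable (PiM I M) (\<lambda>\<omega>. (\<Sum>t\<in>I. c t * h t (\<omega> t))\<^sup>2)"
    unfolding square_eq using F_int by (intro Bochner_Integration.integrable_sum) auto
  have "integral\<^sup>L (PiM I M) (\<lambda>\<omega>. (\<Sum>t\<in>I. c t * h t (\<omega> t))\<^sup>2)
      = (\<Sum>t\<in>I. integral\<^sup>L (PiM I M) (\<lambda>\<omega>. \<Sum>s\<in>I. F t s \<omega>))"
    unfolding square_eq
    by (rule Bochner_Integration.integral_sum) (auto intro: Bochner_Integration.integrable_sum F_int)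
  also have "\<dots> = (\<Sum>t\<in>I. \<Sum>s\<in>I. integral\<^sup>L (PiM I M) (F t s))"
    by (intro sum.cong refl Bochner_Integration.integral_sum F_int)
  also have "\<dots> = (\<Sum>t\<in>I. \<Sum>s\<in>I. if t = s then (c t)\<^sup>2 * integral\<^sup>L (M t) (\<lambda>x. (h t x)\<^sup>2) else 0)"
    unfolding F_def using product_integral by (intro sum.cong refl) (simp add: power2_eq_square)
  also have "\<dots> = (\<Sum>t\<in>I. (c t)\<^sup>2 * integral\<^sup>L (M t) (\<lambda>x. (h t x)\<^sup>2))"
    using fin by (simp add: sum.delta)
  also have "\<dots> \<le> (\<Sum>t\<in>I. (c t)\<^sup>2 * V)"
    using h_sq_le by (intro sum_mono mult_left_mono) auto
  finally show "integral\<^sup>L (PiM I M) (\<lambda>\<omega>. (\<Sum>t\<in>I. c t * h t (\<omega> t))\<^sup>2) \<le> V * (\<Sum>t\<in>I. (c t)\<^sup>2)"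
    by (simp add: sum_distrib_left mult.commute)
qed

end

lemma
  fixes f :: "'a \<Rightarrow> real" and g :: "'b \<Rightarrow> real"
  assumes M1: "prob_space M1" and M2: "prob_space M2"
    and f_meas[measurable]: "f \<in> borel_measurable M1" and f_sq: "integrable M1 (\<lambda>x. (f x)\<^sup>2)"
    and g_meas[measurable]: "g \<in> borel_measurable M2" and g_sq: "integrable M2 (\<lambda>y. (g y)\<^sup>2)"
  shows integral_pair_measure_sum:
      "integral\<^sup>L (M1 \<Otimes>\<^sub>M M2) (\<lambda>z. f (fst z) + g (snd z)) = integral\<^sup>L M1 f + integral\<^sup>L M2 g"
    and integrable_pair_measure_sum_square:
      "integrable (M1 \<Otimes>\<^sub>M M2) (\<lambda>z. (f (fst z) + g (snd z))\<^sup>2)"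
    and integral_pair_measure_sum_square_le:
      "integral\<^sup>L (M1 \<Otimes>\<^sub>M M2) (\<lambda>z. (f (fst z) + g (snd z))\<^sup>2)
        \<le> 2 * integral\<^sup>L M1 (\<lambda>x. (f x)\<^sup>2) + 2 * integral\<^sup>L M2 (\<lambda>y. (g y)\<^sup>2)"
proof -
  interpret M1: prob_space M1 by fact
  interpret M2: prob_space M2 by fact
  have fst_pres: "fst \<in> measurable (M1 \<Otimes>\<^sub>M M2) M1" "distr (M1 \<Otimes>\<^sub>M M2) M1 fst = M1"
    using M2.distr_pair_fst by auto
  have snd_pres: "snd \<in> measurable (M1 \<Otimes>\<^sub>M M2) M2" "distr (M1 \<Otimes>\<^sub>M M2) M2 snd = M2"
    using distr_pair_snd[OF M1 M2] by auto
  have f_int: "integrable M1 f" by (rule M1.square_integrable_imp_integrable[OF f_meas f_sq])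
  have g_int: "integrable M2 g" by (rule M2.square_integrable_imp_integrable[OF g_meas g_sq])
  have f_sq_meas: "(\<lambda>x. (f x)\<^sup>2) \<in> borel_measurable M1" and g_sq_meas: "(\<lambda>y. (g y)\<^sup>2) \<in> borel_measurable M2"
    by measurable
  note fst_int = integrable_comp_measure_preserving[OF fst_pres]
    and fst_integral = integral_comp_measure_preserving[OF fst_pres]
  note snd_int = integrable_comp_measure_preserving[OF snd_pres]
    and snd_integral = integral_comp_measure_preserving[OF snd_pres]
  show "integral\<^sup>L (M1 \<Otimes>\<^sub>M M2) (\<lambda>z. f (fst z) + g (snd z)) = integral\<^sup>L M1 f + integral\<^sup>L M2 g"
    using fst_int[OF f_meas f_int] snd_int[OF g_meas g_int]
      fst_integral[OF f_meas f_int] snd_integral[OF g_meas g_int] by simp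
  define B where "B z = 2 * (f (fst z))\<^sup>2 + 2 * (g (snd z))\<^sup>2" for z
  have B_int: "integrable (M1 \<Otimes>\<^sub>M M2) B"
    unfolding B_def using fst_int[OF f_sq_meas f_sq] snd_int[OF g_sq_meas g_sq] by simp
  have square_le_B: "(f (fst z) + g (snd z))\<^sup>2 \<le> B z" for z
  proof -
    have "0 \<le> (f (fst z) - g (snd z))\<^sup>2" by simp
    then show ?thesis unfolding B_def by (simp add: power2_eq_square algebra_simps)
  qed
  show square_int: "integrable (M1 \<Otimes>\<^sub>M M2) (\<lambda>z. (f (fst z) + g (snd z))\<^sup>2)"
    by (rule Bochner_Integration.integrable_bound[OF B_int]) (auto intro!: AE_I2 order_trans[OF square_le_B])
  have "integral\<^sup>L (M1 \<Otimes>\<^sub>M M2) (\<lambda>z. (f (fst z) + g (snd z))\<^sup>2) \<le> integral\<^sup>L (M1 \<Otimes>\<^sub>M M2) B"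
    by (rule integral_mono[OF square_int B_int square_le_B])
  also have "\<dots> = 2 * integral\<^sup>L M1 (\<lambda>x. (f x)\<^sup>2) + 2 * integral\<^sup>L M2 (\<lambda>y. (g y)\<^sup>2)"
    unfolding B_def using fst_int[OF f_sq_meas f_sq] snd_int[OF g_sq_meas g_sq]
      fst_integral[OF f_sq_meas f_sq] snd_integral[OF g_sq_meas g_sq] by simp
  finally show "integral\<^sup>L (M1 \<Otimes>\<^sub>M M2) (\<lambda>z. (f (fst z) + g (snd z))\<^sup>2)
      \<le> 2 * integral\<^sup>L M1 (\<lambda>x. (f x)\<^sup>2) + 2 * integral\<^sup>L M2 (\<lambda>y. (g y)\<^sup>2)" .
qed

lemma (in prob_space) nn_integral_abs_le_sqrt_second_moment:
  fixes X :: "'a \<Rightarrow> real"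
  assumes X_sq: "integrable M (\<lambda>x. (X x)\<^sup>2)" and le_V: "integral\<^sup>L M (\<lambda>x. (X x)\<^sup>2) \<le> V"
    and V: "0 < V"
  shows "(\<integral>\<^sup>+x. ennreal \<bar>X x\<bar> \<partial>M) \<le> ennreal (sqrt V)"
proof -
  \<comment> \<open>the AM-GM weight for which both terms of the bound equal \<open>sqrt V / 2\<close>\<close>
  define a where "a = 1 / sqrt V"
  have a: "a > 0" using V by (simp add: a_def)
  have am_gm: "\<bar>X x\<bar> \<le> (a * (X x)\<^sup>2 + 1 / a) / 2" for x
  proof -
    have "0 \<le> (a * \<bar>X x\<bar> - 1)\<^sup>2" by simp
    then have "2 * a * \<bar>X x\<bar> \<le> a\<^sup>2 * (X x)\<^sup>2 + 1" by (simp add: power2_eq_square algebra_simps)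
    then show ?thesis using a by (simp add: field_simps power2_eq_square)
  qed
  have bound_int: "integrable M (\<lambda>x. (a * (X x)\<^sup>2 + 1 / a) / 2)" using X_sq by simp
  have "(\<integral>\<^sup>+x. ennreal \<bar>X x\<bar> \<partial>M) \<le> (\<integral>\<^sup>+x. ennreal ((a * (X x)\<^sup>2 + 1 / a) / 2) \<partial>M)"
    by (intro nn_integral_mono ennreal_leI am_gm)
  also have "\<dots> = ennreal (integral\<^sup>L M (\<lambda>x. (a * (X x)\<^sup>2 + 1 / a) / 2))"
    using a by (intro nn_integral_eq_integral bound_int) auto
  also have "integral\<^sup>L M (\<lambda>x. (a * (X x)\<^sup>2 + 1 / a) / 2) = (a * integral\<^sup>L M (\<lambda>x. (X x)\<^sup>2) + 1 / a) / 2"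
    using X_sq prob_space by simp
  also have "\<dots> \<le> (a * V + 1 / a) / 2"
    using le_V a by (simp add: divide_right_mono mult_left_mono)
  also have "(a * V + 1 / a) / 2 = sqrt V"
    using V unfolding a_def by (simp add: field_simps)
  finally show ?thesis by (simp add: ennreal_leI)
qed

lemma square_le_exp_plus_exp_neg: "(x::real)\<^sup>2 \<le> 2 * exp x + 2 * exp (-x)"
proof -
  have "\<bar>x\<bar>\<^sup>2 \<le> 2 * exp \<bar>x\<bar>"
    using exp_lower_Taylor_quadratic[of "\<bar>x\<bar>"] by simp
  then show ?thesis
    by (cases "x \<ge> 0") (auto simp: add_increasing add_increasing2)
qed

lemma
  assumes "sub_gaussian1 D"
  shows integrable_square_sub_gaussian1: "integrable D (\<lambda>x. x\<^sup>2)"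
    and second_moment_sub_gaussian1_le: "integral\<^sup>L D (\<lambda>x. x\<^sup>2) \<le> 4 * exp (1 / 2)"
proof -
  have mgf: "integrable D (\<lambda>x. exp (l * x))" "integral\<^sup>L D (\<lambda>x. exp (l * x)) \<le> exp (l\<^sup>2 / 2)" for l
    using assms unfolding sub_gaussian1_def by auto
  have bound_int: "integrable D (\<lambda>x. 2 * exp x + 2 * exp (-x))"
    using mgf(1)[of 1] mgf(1)[of "-1"] by simp
  have [measurable_cong]: "sets D = sets borel"
    using assms unfolding sub_gaussian1_def by auto
  show sq_int: "integrable D (\<lambda>x. x\<^sup>2)"
    by (rule Bochner_Integration.integrable_bound[OF bound_int])
      (auto intro!: AE_I2 order_trans[OF square_le_exp_plus_exp_neg])
  have "integral\<^sup>L D (\<lambda>x. x\<^sup>2) \<le> integral\<^sup>L D (\<lambda>x. 2 * exp x + 2 * exp (-x))"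
    by (rule integral_mono[OF sq_int bound_int square_le_exp_plus_exp_neg])
  also have "\<dots> = 2 * integral\<^sup>L D (\<lambda>x. exp (1 * x)) + 2 * integral\<^sup>L D (\<lambda>x. exp ((-1) * x))"
    using mgf(1)[of 1] mgf(1)[of "-1"] by simp
  also have "\<dots> \<le> 4 * exp (1 / 2)"
    using mgf(2)[of 1] mgf(2)[of "-1"] by simp
  finally show "integral\<^sup>L D (\<lambda>x. x\<^sup>2) \<le> 4 * exp (1 / 2)" .
qed

definition unit_mean :: "nat \<Rightarrow> (nat \<Rightarrow> real) \<Rightarrow> real" where
  "unit_mean N f = 1 / real N * (\<Sum>i<N. f i)"

lemma
  assumes "\<And>i. i < N \<Longrightarrow> 0 \<le> f i \<and> f i \<le> 1"
  shows unit_mean_nonneg: "0 \<le> unit_mean N f"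
    and unit_mean_le_one: "unit_mean N f \<le> 1"
proof -
  show "0 \<le> unit_mean N f"
    unfolding unit_mean_def by (intro mult_nonneg_nonneg sum_nonneg) (use assms in auto)
  have "(\<Sum>i<N. f i) \<le> real N"
    using sum_mono[of "{..<N}" f "\<lambda>_. 1"] assms by simp
  then show "unit_mean N f \<le> 1"
    unfolding unit_mean_def by (cases "N = 0") (simp_all add: field_simps)
qed

lemma
  fixes N :: nat
  assumes "sub_gaussian1 D"
  defines "Q \<equiv> PiM {..<N} (\<lambda>_. D)"
  shows prob_space_noise: "prob_space Q"
    and measurable_unit_mean_noise: "unit_mean N \<in> borel_measurable Q"
    and integral_unit_mean_noise: "integral\<^sup>L Q (unit_mean N) = 0"
    and integrable_unit_mean_noise_square: "integrable Q (\<lambda>\<eta>. (unit_mean N \<eta>)\<^sup>2)"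
    and integral_unit_mean_noise_square_le: "integral\<^sup>L Q (\<lambda>\<eta>. (unit_mean N \<eta>)\<^sup>2) \<le> 4 * exp (1 / 2)"
proof -
  have D: "prob_space D" "integrable D (\<lambda>x. x)" "integral\<^sup>L D (\<lambda>x. x) = 0"
    and [measurable_cong]: "sets D = sets borel"
    using assms(1) unfolding sub_gaussian1_def by auto
  interpret product_prob_space "\<lambda>_. D" "{..<N}"
    by (intro product_prob_spaceI D)
  have id_meas: "(\<lambda>x. x) \<in> borel_measurable D" by measurable
  show "prob_space Q" unfolding Q_def by (rule prob_space_PiM) (use D in auto)
  show "unit_mean N \<in> borel_measurable Q" unfolding Q_def unit_mean_def by measurable
  have mean_eq: "unit_mean N \<eta> = (\<Sum>i<N. 1 / real N * \<eta> i)" for \<eta>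
    by (simp add: unit_mean_def sum_distrib_left)
  show "integral\<^sup>L Q (unit_mean N) = 0"
    unfolding mean_eq Q_def
    using integrable_PiM_component[OF _ id_meas D(2)] integral_PiM_component[OF _ id_meas D(2)] D(3)
    by (simp add: Bochner_Integration.integral_sum)
  note sq = integrable_square_sub_gaussian1[OF assms(1)] second_moment_sub_gaussian1_le[OF assms(1)]
  show "integrable Q (\<lambda>\<eta>. (unit_mean N \<eta>)\<^sup>2)"
    unfolding mean_eq Q_def
    by (rule integrable_PiM_weighted_sum_square[where h = "\<lambda>_ x. x"]) (use id_meas sq D(3) in auto)
  have "integral\<^sup>L Q (\<lambda>\<eta>. (unit_mean N \<eta>)\<^sup>2) \<le> 4 * exp (1 / 2) * (\<Sum>i<N. (1 / real N)\<^sup>2)"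
    unfolding mean_eq Q_def
    by (rule integral_PiM_weighted_sum_square_le[where h = "\<lambda>_ x. x"]) (use id_meas sq D(3) in auto)
  also have "(\<Sum>i<N. (1 / real N)\<^sup>2) \<le> 1"
    by (cases "N = 0") (simp_all add: power2_eq_square)
  finally show "integral\<^sup>L Q (\<lambda>\<eta>. (unit_mean N \<eta>)\<^sup>2) \<le> 4 * exp (1 / 2)"
    by simp
qed

lemma uniform_arm_round_moments:
  fixes P :: "(nat \<Rightarrow> nat) set" and Y :: "nat \<Rightarrow> (nat \<Rightarrow> nat) \<Rightarrow> real" and N :: nat
  assumes P: "finite P" "P \<noteq> {}"
    and Y: "\<And>i A. i < N \<Longrightarrow> A \<in> P \<Longrightarrow> 0 \<le> Y i A \<and> Y i A \<le> 1"
    and D: "sub_gaussian1 D"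
  defines "M \<equiv> measure_pmf (pmf_of_set P) \<Otimes>\<^sub>M PiM {..<N} (\<lambda>_. D)"
    and "\<mu> \<equiv> unit_mean N (\<lambda>i. (\<Sum>A\<in>P. Y i A) / real (card P))"
  defines "h \<equiv> \<lambda>x. unit_mean N (\<lambda>i. Y i (fst x) + snd x i) - \<mu>"
  shows "h \<in> borel_measurable M" "integrable M (\<lambda>x. (h x)\<^sup>2)"
    "integral\<^sup>L M h = 0" "integral\<^sup>L M (\<lambda>x. (h x)\<^sup>2) \<le> 2 + 8 * exp (1 / 2)"
proof -
  define Mp where "Mp = measure_pmf (pmf_of_set P)"
  define Q where "Q = PiM {..<N} (\<lambda>_. D)"
  have Mp: "prob_space Mp" unfolding Mp_def by (rule prob_space_measure_pmf)
  have Q: "prob_space Q" unfolding Q_def by (rule prob_space_noise[OF D])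
  define a where "a A = unit_mean N (\<lambda>i. Y i A) - \<mu>" for A
  have h_eq: "h = (\<lambda>x. a (fst x) + unit_mean N (snd x))"
    unfolding h_def a_def unit_mean_def by (auto simp: fun_eq_iff sum.distrib algebra_simps)
  have Mp_integral: "integral\<^sup>L Mp f = (\<Sum>A\<in>P. f A) / real (card P)" for f :: "_ \<Rightarrow> real"
    unfolding Mp_def using P by (simp add: integral_pmf_of_set)
  have Mp_int: "integrable Mp f" for f :: "_ \<Rightarrow> real"
    unfolding Mp_def using P by (intro integrable_measure_pmf_finite) simp
  have a_meas[measurable]: "a \<in> borel_measurable Mp" unfolding Mp_def by simp
  have b_meas[measurable]: "unit_mean N \<in> borel_measurable Q"
    unfolding Q_def by (rule measurable_unit_mean_noise[OF D])
  have "0 \<le> (\<Sum>A\<in>P. Y i A) / real (card P) \<and> (\<Sum>A\<in>P. Y i A) / real (card P) \<le> 1" if "i < N" for i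
    using sum_mono[of P "Y i" "\<lambda>_. 1"] sum_nonneg[of P "Y i"] Y[OF that] P
    by (auto simp: field_simps card_gt_0_iff)
  then have \<mu>: "0 \<le> \<mu>" "\<mu> \<le> 1"
    unfolding \<mu>_def by (blast intro: unit_mean_nonneg unit_mean_le_one)+
  have "\<bar>a A\<bar> \<le> 1" if "A \<in> P" for A
    using unit_mean_nonneg[of N "\<lambda>i. Y i A"] unit_mean_le_one[of N "\<lambda>i. Y i A"] Y that \<mu>
    unfolding a_def by auto
  then have a_sq: "integral\<^sup>L Mp (\<lambda>A. (a A)\<^sup>2) \<le> 1"
    using P sum_mono[of P "\<lambda>A. (a A)\<^sup>2" "\<lambda>_. 1"]
    by (auto simp: Mp_integral abs_square_le_1 card_gt_0_iff field_simps)
  have "(\<Sum>A\<in>P. unit_mean N (\<lambda>i. Y i A)) = unit_mean N (\<lambda>i. \<Sum>A\<in>P. Y i A)"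
    unfolding unit_mean_def by (simp add: sum_distrib_left sum.swap[of _ P])
  also have "\<dots> = real (card P) * \<mu>"
    using P unfolding \<mu>_def unit_mean_def by (simp add: sum_divide_distrib[symmetric])
  finally have a_mean: "integral\<^sup>L Mp a = 0"
    using P unfolding a_def by (simp add: Mp_integral sum_subtractf)
  note sum_moments = integral_pair_measure_sum[OF Mp Q a_meas Mp_int b_meas]
    integrable_pair_measure_sum_square[OF Mp Q a_meas Mp_int b_meas]
    integral_pair_measure_sum_square_le[OF Mp Q a_meas Mp_int b_meas]
  note noise = integrable_unit_mean_noise_square[OF D, of N, folded Q_def]
    integral_unit_mean_noise[OF D, of N, folded Q_def]
    integral_unit_mean_noise_square_le[OF D, of N, folded Q_def]
  have M_eq: "M = Mp \<Otimes>\<^sub>M Q" unfolding M_def Mp_def Q_def ..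
  show "h \<in> borel_measurable M" unfolding h_eq M_eq by measurable
  show "integrable M (\<lambda>x. (h x)\<^sup>2)"
    unfolding h_eq M_eq using sum_moments(2) noise(1) by simp
  show "integral\<^sup>L M h = 0"
    unfolding h_eq M_eq using sum_moments(1)[OF noise(1)] noise(2) a_mean by simp
  show "integral\<^sup>L M (\<lambda>x. (h x)\<^sup>2) \<le> 2 + 8 * exp (1 / 2)"
    unfolding h_eq M_eq using sum_moments(3)[OF noise(1)] noise(3) a_sq by linarith
qed

definition rr_rounds :: "'a list \<Rightarrow> nat \<Rightarrow> 'a \<Rightarrow> nat set" where
  "rr_rounds es T1 v = {t \<in> {1..T1}. rr_arm es t = v}"

lemma card_rr_rounds_ge:
  assumes "v \<in> set es"
  shows "T1 div length es \<le> card (rr_rounds es T1 v)"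
proof -
  define m where "m = length es"
  have m: "m > 0" using assms unfolding m_def by (cases es) auto
  obtain j where j: "j < m" "es ! j = v" using assms unfolding m_def by (auto simp: in_set_conv_nth)
  define f where "f q = q * m + j + 1" for q
  have inj: "inj_on f {..<T1 div m}" unfolding f_def inj_on_def by auto
  have "f ` {..<T1 div m} \<subseteq> rr_rounds es T1 v"
  proof
    fix t assume "t \<in> f ` {..<T1 div m}"
    then obtain q where q: "q < T1 div m" "t = f q" by auto
    have "q * m + m \<le> (T1 div m) * m"
      using mult_right_mono[of "Suc q" "T1 div m" m] q(1) by simp
    also have "\<dots> \<le> T1" by (simp add: div_times_less_eq_dividend)
    finally show "t \<in> rr_rounds es T1 v"
      using q j unfolding rr_rounds_def rr_arm_def f_def m_def by simp
  qed
  then have "card (f ` {..<T1 div m}) \<le> card (rr_rounds es T1 v)"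
    by (intro card_mono) (auto simp: rr_rounds_def)
  then show ?thesis using card_image[OF inj] unfolding m_def by simp
qed

lemma
  assumes "v \<in> set es" "length es \<le> T1"
  shows card_rr_rounds_pos: "0 < card (rr_rounds es T1 v)"
    and inverse_card_rr_rounds_le: "1 / real (card (rr_rounds es T1 v)) \<le> 2 * real (length es) / real T1"
proof -
  define m where "m = length es"
  define n where "n = card (rr_rounds es T1 v)"
  have m: "m > 0" using assms(1) unfolding m_def by (cases es) auto
  have div_pos: "1 \<le> T1 div m" using assms(2) m unfolding m_def[symmetric] by (simp add: Suc_le_eq div_greater_zero_iff)
  have div_le: "T1 div m \<le> n" using card_rr_rounds_ge[OF assms(1)] unfolding m_def n_def .
  then show "0 < card (rr_rounds es T1 v)" using div_pos unfolding n_def by simp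
  have "T1 < (T1 div m) * m + m" using div_mult_mod_eq[of T1 m] mod_less_divisor[OF m, of T1] by linarith
  also have "\<dots> \<le> n * m + n * m"
    using div_le div_pos mult_right_mono[OF div_le, of m] by (metis add_mono mult_1 mult_le_mono1 order_trans)
  also have "\<dots> = 2 * n * m" by simp
  finally have "real T1 \<le> 2 * real n * real m" by (metis less_imp_le of_nat_le_iff of_nat_mult of_nat_numeral)
  then show "1 / real (card (rr_rounds es T1 v)) \<le> 2 * real (length es) / real T1"
    using div_le div_pos m assms(2) unfolding n_def[symmetric] m_def[symmetric]
    by (simp add: field_simps)
qed

definition rr_weight :: "'a list \<Rightarrow> nat \<Rightarrow> 'a \<Rightarrow> 'a \<Rightarrow> nat \<Rightarrow> real" where
  "rr_weight es T1 v w t =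
     (if rr_arm es t = v then 1 / real (card (rr_rounds es T1 v)) else 0)
     - (if rr_arm es t = w then 1 / real (card (rr_rounds es T1 w)) else 0)"

lemma sum_rr_weight:
  "(\<Sum>t\<in>{1..T1}. rr_weight es T1 v w t * f t)
     = (\<Sum>t\<in>rr_rounds es T1 v. f t) / real (card (rr_rounds es T1 v))
       - (\<Sum>t\<in>rr_rounds es T1 w. f t) / real (card (rr_rounds es T1 w))"
proof -
  have "(\<Sum>t\<in>{1..T1}. rr_weight es T1 v w t * f t)
      = (\<Sum>t\<in>{1..T1}. if rr_arm es t = v then f t / real (card (rr_rounds es T1 v)) else 0)
        - (\<Sum>t\<in>{1..T1}. if rr_arm es t = w then f t / real (card (rr_rounds es T1 w)) else 0)"
    unfolding sum_subtractf[symmetric] rr_weight_def by (intro sum.cong) auto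
  then show ?thesis
    by (simp add: sum.inter_filter[symmetric] sum_divide_distrib rr_rounds_def)
qed

lemma sum_rr_weight_square:
  assumes "v \<noteq> w"
  shows "(\<Sum>t\<in>{1..T1}. (rr_weight es T1 v w t)\<^sup>2)
     = 1 / real (card (rr_rounds es T1 v)) + 1 / real (card (rr_rounds es T1 w))"
proof -
  define x y where "x = 1 / real (card (rr_rounds es T1 v))" and "y = 1 / real (card (rr_rounds es T1 w))"
  have "(rr_weight es T1 v w t)\<^sup>2 = (if rr_arm es t = v then x\<^sup>2 else 0) + (if rr_arm es t = w then y\<^sup>2 else 0)" for t
    using assms unfolding rr_weight_def x_def y_def by (simp add: power2_eq_square)
  then have "(\<Sum>t\<in>{1..T1}. (rr_weight es T1 v w t)\<^sup>2)
      = real (card (rr_rounds es T1 v)) * x\<^sup>2 + real (card (rr_rounds es T1 w)) * y\<^sup>2"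
    by (simp add: sum.distrib sum.inter_filter[symmetric] rr_rounds_def)
  then show ?thesis unfolding x_def y_def by (simp add: power2_eq_square)
qed

definition mean_reward where
  "mean_reward N K S H Y v = unit_mean N (\<lambda>i. Ytil N K S H Y i v)"

definition centred_reward where
  "centred_reward N K S H Y v x = unit_mean N (\<lambda>i. Y i (fst x) + snd x i) - mean_reward N K S H Y v"

definition round_space where
  "round_space N K S H D v = measure_pmf (pmf_of_set (preimg N K S H v)) \<Otimes>\<^sub>M PiM {..<N} (\<lambda>_. D)"

lemma phase1_space_eq_PiM_round_space:
  "phase1_space N K S H D es T1 = PiM {1..T1} (\<lambda>t. round_space N K S H D (rr_arm es t))"
  unfolding phase1_space_def round_space_def ..

lemma ATE_eq_mean_reward_diff:
  "ATE N K S H Y v w = mean_reward N K S H Y v - mean_reward N K S H Y w"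
  unfolding ATE_def mean_reward_def unit_mean_def by (simp add: sum_subtractf right_diff_distrib)

lemma prob_space_round_space: "prob_space D \<Longrightarrow> prob_space (round_space N K S H D v)"
  unfolding round_space_def by (intro prob_space_pair prob_space_measure_pmf prob_space_PiM)

lemma prob_space_phase1_space: "prob_space D \<Longrightarrow> prob_space (phase1_space N K S H D es T1)"
  unfolding phase1_space_eq_PiM_round_space by (intro prob_space_PiM prob_space_round_space)

lemma
  assumes v: "v \<in> U_O N K S H" and Y: "\<forall>i<N. \<forall>A\<in>superarms N K. 0 \<le> Y i A \<and> Y i A \<le> 1"
    and D: "sub_gaussian1 D"
  shows measurable_centred_reward:
      "centred_reward N K S H Y v \<in> borel_measurable (round_space N K S H D v)"
    and integrable_centred_reward_square:
      "integrable (round_space N K S H D v) (\<lambda>x. (centred_reward N K S H Y v x)\<^sup>2)"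
    and integral_centred_reward:
      "integral\<^sup>L (round_space N K S H D v) (centred_reward N K S H Y v) = 0"
    and integral_centred_reward_square_le:
      "integral\<^sup>L (round_space N K S H D v) (\<lambda>x. (centred_reward N K S H Y v x)\<^sup>2)
        \<le> 2 + 8 * exp (1 / 2)"
proof -
  have "finite (preimg N K S H v)"
    by (rule finite_subset[of _ "superarms N K"])
      (auto simp: preimg_def superarms_def intro!: finite_PiE)
  moreover have "preimg N K S H v \<noteq> {}"
    using v unfolding U_O_def preimg_def by auto
  moreover have "\<And>i A. i < N \<Longrightarrow> A \<in> preimg N K S H v \<Longrightarrow> 0 \<le> Y i A \<and> Y i A \<le> 1"
    using Y unfolding preimg_def by auto
  ultimately show
    "centred_reward N K S H Y v \<in> borel_measurable (round_space N K S H D v)"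
    "integrable (round_space N K S H D v) (\<lambda>x. (centred_reward N K S H Y v x)\<^sup>2)"
    "integral\<^sup>L (round_space N K S H D v) (centred_reward N K S H Y v) = 0"
    "integral\<^sup>L (round_space N K S H D v) (\<lambda>x. (centred_reward N K S H Y v x)\<^sup>2)
      \<le> 2 + 8 * exp (1 / 2)"
    using uniform_arm_round_moments[OF _ _ _ D, of "preimg N K S H v" N Y]
    unfolding round_space_def centred_reward_def mean_reward_def Ytil_def by auto
qed

lemma Rhat_eq_plus_mean_deviation:
  assumes "rr_rounds es T1 v \<noteq> {}"
  shows "Rhat N Y es T1 \<omega> v = \<mu> + (\<Sum>t\<in>rr_rounds es T1 v. unit_mean N (\<lambda>i. Y i (fst (\<omega> t)) + snd (\<omega> t) i) - \<mu>)
      / real (card (rr_rounds es T1 v))"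
proof -
  have "finite (rr_rounds es T1 v)" unfolding rr_rounds_def by simp
  then have "card (rr_rounds es T1 v) > 0" using assms by (simp add: card_gt_0_iff)
  then show ?thesis
    using assms unfolding Rhat_def rr_rounds_def[symmetric] unit_mean_def Let_def
    by (simp add: sum_subtractf field_simps)
qed

lemma ATE_hat_error_eq_weighted_sum:
  assumes "rr_rounds es T1 v \<noteq> {}" "rr_rounds es T1 w \<noteq> {}"
  shows "ATE_hat N Y es T1 \<omega> v w - ATE N K S H Y v w
    = (\<Sum>t\<in>{1..T1}. rr_weight es T1 v w t * centred_reward N K S H Y (rr_arm es t) (\<omega> t))"
proof -
  have "(\<Sum>t\<in>rr_rounds es T1 u. centred_reward N K S H Y (rr_arm es t) (\<omega> t))
      = (\<Sum>t\<in>rr_rounds es T1 u. unit_mean N (\<lambda>i. Y i (fst (\<omega> t)) + snd (\<omega> t) i) - mean_reward N K S H Y u)"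
    for u
    unfolding centred_reward_def by (intro sum.cong) (auto simp: rr_rounds_def)
  then show ?thesis
    unfolding sum_rr_weight ATE_hat_def ATE_eq_mean_reward_diff
      Rhat_eq_plus_mean_deviation[OF assms(1), of _ _ _ "mean_reward N K S H Y v"]
      Rhat_eq_plus_mean_deviation[OF assms(2), of _ _ _ "mean_reward N K S H Y w"]
    by simp
qed

lemma
  fixes S :: "nat \<Rightarrow> (nat \<Rightarrow> nat) \<Rightarrow> (nat \<Rightarrow> nat \<Rightarrow> real) \<Rightarrow> 'e" and es :: "(nat \<Rightarrow> 'e) list"
  assumes Y: "\<forall>i<N. \<forall>A\<in>superarms N K. 0 \<le> Y i A \<and> Y i A \<le> 1" and D: "sub_gaussian1 D"
    and realized: "set es \<subseteq> U_O N K S H"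
    and v: "v \<in> set es" and w: "w \<in> set es" and "v \<noteq> w" and T1: "length es \<le> T1"
  defines "err \<equiv> \<lambda>\<omega>. ATE_hat N Y es T1 \<omega> v w - ATE N K S H Y v w"
  shows integrable_ATE_hat_error_square:
      "integrable (phase1_space N K S H D es T1) (\<lambda>\<omega>. (err \<omega>)\<^sup>2)"
    and integral_ATE_hat_error_square_le:
      "integral\<^sup>L (phase1_space N K S H D es T1) (\<lambda>\<omega>. (err \<omega>)\<^sup>2)
        \<le> (2 + 8 * exp (1 / 2)) * (4 * (real (length es) / real T1))"
proof -
  define M where "M t = round_space N K S H D (rr_arm es t)" for t
  define h where "h t = centred_reward N K S H Y (rr_arm es t)" for t
  have played: "rr_arm es t \<in> U_O N K S H" for t
    using realized v nth_mem[of "(t - 1) mod length es" es] unfolding rr_arm_def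
    by (cases es) auto
  note round = measurable_centred_reward[OF played Y D]
    integrable_centred_reward_square[OF played Y D] integral_centred_reward[OF played Y D]
    integral_centred_reward_square_le[OF played Y D]
  have "prob_space D" using D unfolding sub_gaussian1_def by simp
  interpret product_prob_space M "{1..T1}"
    by (intro product_prob_spaceI) (simp add: M_def prob_space_round_space \<open>prob_space D\<close>)
  have err_eq: "err = (\<lambda>\<omega>. \<Sum>t\<in>{1..T1}. rr_weight es T1 v w t * h t (\<omega> t))"
    unfolding err_def h_def fun_eq_iff
    using card_rr_rounds_pos[OF v T1] card_rr_rounds_pos[OF w T1]
    by (intro allI ATE_hat_error_eq_weighted_sum) auto
  show "integrable (phase1_space N K S H D es T1) (\<lambda>\<omega>. (err \<omega>)\<^sup>2)"
    unfolding phase1_space_eq_PiM_round_space M_def[symmetric] err_eq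
    by (rule integrable_PiM_weighted_sum_square[where V = "2 + 8 * exp (1 / 2)"])
      (simp_all add: M_def h_def round)
  have "integral\<^sup>L (phase1_space N K S H D es T1) (\<lambda>\<omega>. (err \<omega>)\<^sup>2)
      \<le> (2 + 8 * exp (1 / 2)) * (\<Sum>t\<in>{1..T1}. (rr_weight es T1 v w t)\<^sup>2)"
    unfolding phase1_space_eq_PiM_round_space M_def[symmetric] err_eq
    by (rule integral_PiM_weighted_sum_square_le) (simp_all add: M_def h_def round)
  also have "(\<Sum>t\<in>{1..T1}. (rr_weight es T1 v w t)\<^sup>2)
      = 1 / real (card (rr_rounds es T1 v)) + 1 / real (card (rr_rounds es T1 w))"
    by (rule sum_rr_weight_square[OF \<open>v \<noteq> w\<close>])
  also have "\<dots> \<le> 4 * (real (length es) / real T1)"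
    using inverse_card_rr_rounds_le[OF v T1] inverse_card_rr_rounds_le[OF w T1] by simp
  finally show "integral\<^sup>L (phase1_space N K S H D es T1) (\<lambda>\<omega>. (err \<omega>)\<^sup>2)
      \<le> (2 + 8 * exp (1 / 2)) * (4 * (real (length es) / real T1))"
    by (simp add: mult_left_mono)
qed

lemma ATE_hat_error_bound:
  fixes S :: "nat \<Rightarrow> (nat \<Rightarrow> nat) \<Rightarrow> (nat \<Rightarrow> nat \<Rightarrow> real) \<Rightarrow> 'e" and es :: "(nat \<Rightarrow> 'e) list"
  assumes Y: "\<forall>i<N. \<forall>A\<in>superarms N K. 0 \<le> Y i A \<and> Y i A \<le> 1" and D: "sub_gaussian1 D"
    and realized: "set es \<subseteq> U_O N K S H"
    and v: "v \<in> set es" and w: "w \<in> set es" and "v \<noteq> w" and T1: "length es \<le> T1"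
  shows "(\<integral>\<^sup>+\<omega>. ennreal \<bar>ATE_hat N Y es T1 \<omega> v w - ATE N K S H Y v w\<bar>
      \<partial>phase1_space N K S H D es T1)
    \<le> ennreal (sqrt (4 * (2 + 8 * exp (1 / 2))) * sqrt (real (length es) / real T1))"
proof -
  define V where "V = (2 + 8 * exp (1 / 2)) * (4 * (real (length es) / real T1))"
  have "prob_space (phase1_space N K S H D es T1)"
    using D unfolding sub_gaussian1_def by (simp add: prob_space_phase1_space)
  moreover have "0 < V"
  proof -
    have "0 < length es" using v by (cases es) auto
    moreover from this have "0 < T1" using T1 by linarith
    ultimately show ?thesis unfolding V_def by (intro mult_pos_pos add_pos_pos divide_pos_pos) simp_all
  qed
  moreover have "sqrt V = sqrt (4 * (2 + 8 * exp (1 / 2))) * sqrt (real (length es) / real T1)"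
    unfolding V_def by (simp add: real_sqrt_mult[symmetric] mult_ac)
  ultimately show ?thesis
    using prob_space.nn_integral_abs_le_sqrt_second_moment[of _ "\<lambda>\<omega>. _ \<omega> - _", OF _
        integrable_ATE_hat_error_square[OF assms] integral_ATE_hat_error_square_le[OF assms]]
    unfolding V_def by simp
qed

theorem theorem3:
  shows "\<exists>C>0. \<exists>k::nat. \<forall>(N::nat) (K::nat) (T::nat) (T1::nat) (H::nat \<Rightarrow> nat \<Rightarrow> real)
      (S::nat \<Rightarrow> (nat \<Rightarrow> nat) \<Rightarrow> (nat \<Rightarrow> nat \<Rightarrow> real) \<Rightarrow> 'e) (Us::'e set) (Cl::nat set set)
      (Y::nat \<Rightarrow> (nat \<Rightarrow> nat) \<Rightarrow> real) (D::real measure) (es::(nat \<Rightarrow> 'e) list) Si Sj.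
    finite Us \<and> (\<forall>i<N. \<forall>A\<in>superarms N K. S i A H \<in> Us) \<and>
    partition_on {..<N} Cl \<and>
    (\<forall>i<N. \<forall>A\<in>superarms N K. 0 \<le> Y i A \<and> Y i A \<le> 1) \<and>
    sub_gaussian1 D \<and>
    distinct es \<and> set es = U_E N K S H Us Cl \<and>
    2 \<le> card (U_E N K S H Us Cl) \<and> card (U_E N K S H Us Cl) \<le> T \<and>
    card (U_E N K S H Us Cl) \<le> T1 \<and> T1 \<le> T \<and>
    Si \<in> U_E N K S H Us Cl \<and> Sj \<in> U_E N K S H Us Cl \<and> Si \<noteq> Sj
    \<longrightarrow>
    (\<integral>\<^sup>+ \<omega>. ennreal \<bar>ATE_hat N Y es T1 \<omega> Si Sj - ATE N K S H Y Si Sj\<bar>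
        \<partial>(phase1_space N K S H D es T1))
      \<le> ennreal (C * (ln (real T + real K + 2)) ^ k
                   * sqrt (real (card (U_E N K S H Us Cl)) / real T1))"
proof (intro exI[of _ "sqrt (4 * (2 + 8 * exp (1 / 2)))"] conjI exI[of _ 0] allI impI, goal_cases)
  case 1
  show ?case by (simp add: add_pos_pos)
next
  case (2 N K T T1 H S Us Cl Y D es Si Sj)
  then have "length es = card (U_E N K S H Us Cl)" and "set es \<subseteq> U_O N K S H"
    using distinct_card[of es] by (auto simp: U_E_def)
  with 2 show ?case
    using ATE_hat_error_bound[of N K Y D es S H Si Sj T1] by simp
qed

end
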